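(* Let $H,A$ be as in the context and let $\alpha\in A$ be a non-trivial element invariant under the adjoint coaction, i.e. $\alpha_{(1)}S\alpha_{(3)}\otimes\alpha_{(2)}=1\otimes\alpha$. Then each of the following subspaces of $\ker\epsilon\subset H$ is stable under the quantum double action $h\triangleright x=h_{(1)}xSh_{(2)}$, $a\triangleright x=\langle a,x_{(1)}\rangle x_{(2)}-\langle a,x\rangle1$: \[L_\alpha=\{x\in\ker\epsilon\mid x_{(1)}\langle x_{(2)},\alpha\rangle=x\,\epsilon(\alpha)\},\] \[\widetilde{L_\alpha}=\{x\in\ker\epsilon\mid \langle x,a\alpha\rangle=\langle x,a\rangle\epsilon(\alpha)\ \forall a\in\ker\epsilon\subset A\},\] \[L_{\alpha,1}=\{x\in\ker\epsilon\mid \langle x,a\alpha\rangle=\langle x,a\rangle(\epsilon(\alpha)+1)\ \forall a\in\ker\epsilon\subset A\}.\] Moreover $L_\alpha$ is the quantum tangent space (annihilator in $\ker\epsilon\subset H$) of the bicovariant calculus obtained by quotienting $\ker\epsilon\subset A$ by $\{a\alpha-a\epsilon(\alpha)\mid a\in A\}$ (inner type-I), and $L_{\alpha,1}$ is that of the calculus obtained by quotienting $\ker\epsilon\subset A$ by $(\ker\epsilon)\cdot(\alpha-(\epsilon(\alpha)+1))$ (inner type-II).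
   Context: $H,A$ are Hopf algebras over $\mathbb{C}$ with invertible antipodes, non-degenerately paired by a Hopf pairing $\langle\ ,\ \rangle$ ($\langle hg,a\rangle=\langle h,a_{(1)}\rangle\langle g,a_{(2)}\rangle$, $\langle h,ab\rangle=\langle h_{(1)},a\rangle\langle h_{(2)},b\rangle$); Sweedler notation. The quantum tangent space of a bicovariant calculus defined by a quotienting subspace $M\subseteq\ker\epsilon\subset A$ (stable under left multiplication and the coaction $v\mapsto v_{(1)}Sv_{(3)}\otimes v_{(2)}$) is $\{x\in\ker\epsilon\subset H\mid\langle x,m\rangle=0\ \forall m\in M\}$. *)

theory Defs
  imports Complex_Main
begin

text \<open>Elements of a tensor product V (x) W are represented by finite lists of simple tensors
(Sweedler sums).  Two representatives are equal as tensors iff all bilinear functionals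
V x W -> C agree on them (bilinear functionals separate points of V (x) W).\<close>

definition is_alg :: "(complex \<Rightarrow> 'x::ring_1 \<Rightarrow> 'x) \<Rightarrow> bool" where
  "is_alg sm \<longleftrightarrow> vector_space sm \<and>
     (\<forall>c x y. sm c (x * y) = sm c x * y \<and> sm c (x * y) = x * sm c y)"

definition lin_fun :: "(complex \<Rightarrow> 'x::ab_group_add \<Rightarrow> 'x) \<Rightarrow> ('x \<Rightarrow> complex) \<Rightarrow> bool" where
  "lin_fun sm f \<longleftrightarrow> (\<forall>x y. f (x + y) = f x + f y) \<and> (\<forall>c x. f (sm c x) = c * f x)"

definition lin_map :: "(complex \<Rightarrow> 'x::ab_group_add \<Rightarrow> 'x) \<Rightarrow> (complex \<Rightarrow> 'y::ab_group_add \<Rightarrow> 'y)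
    \<Rightarrow> ('x \<Rightarrow> 'y) \<Rightarrow> bool" where
  "lin_map smx smy f \<longleftrightarrow> (\<forall>x y. f (x + y) = f x + f y) \<and> (\<forall>c x. f (smx c x) = smy c (f x))"

definition bilin :: "(complex \<Rightarrow> 'x::ab_group_add \<Rightarrow> 'x) \<Rightarrow> (complex \<Rightarrow> 'y::ab_group_add \<Rightarrow> 'y)
    \<Rightarrow> ('x \<Rightarrow> 'y \<Rightarrow> complex) \<Rightarrow> bool" where
  "bilin smx smy f \<longleftrightarrow> (\<forall>y. lin_fun smx (\<lambda>x. f x y)) \<and> (\<forall>x. lin_fun smy (f x))"

definition trilin :: "(complex \<Rightarrow> 'x::ab_group_add \<Rightarrow> 'x) \<Rightarrow> ('x \<Rightarrow> 'x \<Rightarrow> 'x \<Rightarrow> complex) \<Rightarrow> bool" where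
  "trilin sm f \<longleftrightarrow> (\<forall>y z. lin_fun sm (\<lambda>x. f x y z)) \<and> (\<forall>x z. lin_fun sm (\<lambda>y. f x y z))
      \<and> (\<forall>x y. lin_fun sm (f x y))"

definition tsum2 :: "('x \<Rightarrow> 'y \<Rightarrow> 'z::comm_monoid_add) \<Rightarrow> ('x \<times> 'y) list \<Rightarrow> 'z" where
  "tsum2 f r = sum_list (map (\<lambda>(x, y). f x y) r)"

definition tsum3 :: "('x \<Rightarrow> 'y \<Rightarrow> 'w \<Rightarrow> 'z::comm_monoid_add) \<Rightarrow> ('x \<times> 'y \<times> 'w) list \<Rightarrow> 'z" where
  "tsum3 f r = sum_list (map (\<lambda>(x, y, w). f x y w) r)"

definition teq2 :: "(complex \<Rightarrow> 'x::ab_group_add \<Rightarrow> 'x) \<Rightarrow> (complex \<Rightarrow> 'y::ab_group_add \<Rightarrow> 'y)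
    \<Rightarrow> ('x \<times> 'y) list \<Rightarrow> ('x \<times> 'y) list \<Rightarrow> bool" where
  "teq2 smx smy r s \<longleftrightarrow> (\<forall>f. bilin smx smy f \<longrightarrow> tsum2 f r = tsum2 f s)"

definition teq3 :: "(complex \<Rightarrow> 'x::ab_group_add \<Rightarrow> 'x)
    \<Rightarrow> ('x \<times> 'x \<times> 'x) list \<Rightarrow> ('x \<times> 'x \<times> 'x) list \<Rightarrow> bool" where
  "teq3 sm r s \<longleftrightarrow> (\<forall>f. trilin sm f \<longrightarrow> tsum3 f r = tsum3 f s)"

text \<open>Membership of a tensor in X (x) M for a subspace M of Y.\<close>
definition in_tensor_right :: "(complex \<Rightarrow> 'x::ab_group_add \<Rightarrow> 'x) \<Rightarrow> (complex \<Rightarrow> 'y::ab_group_add \<Rightarrow> 'y)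
    \<Rightarrow> 'y set \<Rightarrow> ('x \<times> 'y) list \<Rightarrow> bool" where
  "in_tensor_right smx smy M t \<longleftrightarrow>
     (\<forall>f. bilin smx smy f \<and> (\<forall>x. \<forall>m\<in>M. f x m = 0) \<longrightarrow> tsum2 f t = 0)"

definition cop2L :: "('x \<Rightarrow> ('x \<times> 'x) list) \<Rightarrow> 'x \<Rightarrow> ('x \<times> 'x \<times> 'x) list" where
  "cop2L cop h = concat (map (\<lambda>(a, b). map (\<lambda>(c, d). (c, d, b)) (cop a)) (cop h))"

definition cop2R :: "('x \<Rightarrow> ('x \<times> 'x) list) \<Rightarrow> 'x \<Rightarrow> ('x \<times> 'x \<times> 'x) list" where
  "cop2R cop h = concat (map (\<lambda>(a, b). map (\<lambda>(c, d). (a, c, d)) (cop b)) (cop h))"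

definition hopf_alg :: "(complex \<Rightarrow> 'x::ring_1 \<Rightarrow> 'x) \<Rightarrow> ('x \<Rightarrow> ('x \<times> 'x) list)
    \<Rightarrow> ('x \<Rightarrow> complex) \<Rightarrow> ('x \<Rightarrow> 'x) \<Rightarrow> bool" where
  "hopf_alg sm cop eps S \<longleftrightarrow>
     is_alg sm \<and>
     \<comment> \<open>coproduct linear\<close>
     (\<forall>x y. teq2 sm sm (cop (x + y)) (cop x @ cop y)) \<and>
     (\<forall>c x. teq2 sm sm (cop (sm c x)) (map (\<lambda>(a, b). (sm c a, b)) (cop x))) \<and>
     \<comment> \<open>coassociativity\<close>
     (\<forall>h. teq3 sm (cop2L cop h) (cop2R cop h)) \<and>
     \<comment> \<open>counit\<close>
     lin_fun sm eps \<and>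
     (\<forall>h. tsum2 (\<lambda>a b. sm (eps a) b) (cop h) = h) \<and>
     (\<forall>h. tsum2 (\<lambda>a b. sm (eps b) a) (cop h) = h) \<and>
     \<comment> \<open>coproduct and counit are algebra maps\<close>
     (\<forall>x y. teq2 sm sm (cop (x * y))
        (concat (map (\<lambda>(a, b). map (\<lambda>(c, d). (a * c, b * d)) (cop y)) (cop x)))) \<and>
     teq2 sm sm (cop 1) [(1, 1)] \<and>
     (\<forall>x y. eps (x * y) = eps x * eps y) \<and> eps 1 = 1 \<and>
     \<comment> \<open>antipode\<close>
     lin_map sm sm S \<and>
     (\<forall>h. tsum2 (\<lambda>a b. S a * b) (cop h) = sm (eps h) 1) \<and>
     (\<forall>h. tsum2 (\<lambda>a b. a * S b) (cop h) = sm (eps h) 1) \<and>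
     bij S"

definition hopf_pairing :: "(complex \<Rightarrow> 'h::ring_1 \<Rightarrow> 'h) \<Rightarrow> ('h \<Rightarrow> ('h \<times> 'h) list) \<Rightarrow> ('h \<Rightarrow> complex)
    \<Rightarrow> (complex \<Rightarrow> 'a::ring_1 \<Rightarrow> 'a) \<Rightarrow> ('a \<Rightarrow> ('a \<times> 'a) list) \<Rightarrow> ('a \<Rightarrow> complex)
    \<Rightarrow> ('h \<Rightarrow> 'a \<Rightarrow> complex) \<Rightarrow> bool" where
  "hopf_pairing smH copH epsH smA copA epsA pr \<longleftrightarrow>
     bilin smH smA pr \<and>
     (\<forall>h g a. pr (h * g) a = tsum2 (\<lambda>a1 a2. pr h a1 * pr g a2) (copA a)) \<and>
     (\<forall>h a b. pr h (a * b) = tsum2 (\<lambda>h1 h2. pr h1 a * pr h2 b) (copH h)) \<and>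
     (\<forall>a. pr 1 a = epsA a) \<and> (\<forall>h. pr h 1 = epsH h) \<and>
     (\<forall>h. (\<forall>a. pr h a = 0) \<longrightarrow> h = 0) \<and>
     (\<forall>a. (\<forall>h. pr h a = 0) \<longrightarrow> a = 0)"

definition adcoact :: "('a::ring_1 \<Rightarrow> ('a \<times> 'a) list) \<Rightarrow> ('a \<Rightarrow> 'a) \<Rightarrow> 'a \<Rightarrow> ('a \<times> 'a) list" where
  "adcoact cop S v = map (\<lambda>(b, c, d). (b * S d, c)) (cop2L cop v)"

definition actH :: "('h::ring_1 \<Rightarrow> ('h \<times> 'h) list) \<Rightarrow> ('h \<Rightarrow> 'h) \<Rightarrow> 'h \<Rightarrow> 'h \<Rightarrow> 'h" where
  "actH copH SH h x = tsum2 (\<lambda>h1 h2. h1 * x * SH h2) (copH h)"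

definition actA :: "(complex \<Rightarrow> 'h::ring_1 \<Rightarrow> 'h) \<Rightarrow> ('h \<Rightarrow> ('h \<times> 'h) list)
    \<Rightarrow> ('h \<Rightarrow> 'a \<Rightarrow> complex) \<Rightarrow> 'a \<Rightarrow> 'h \<Rightarrow> 'h" where
  "actA smH copH pr a x = tsum2 (\<lambda>x1 x2. smH (pr x1 a) x2) (copH x) - smH (pr x a) 1"

definition double_stable :: "(complex \<Rightarrow> 'h::ring_1 \<Rightarrow> 'h) \<Rightarrow> ('h \<Rightarrow> ('h \<times> 'h) list) \<Rightarrow> ('h \<Rightarrow> 'h)
    \<Rightarrow> ('h \<Rightarrow> 'a \<Rightarrow> complex) \<Rightarrow> 'h set \<Rightarrow> bool" where
  "double_stable smH copH SH pr L \<longleftrightarrow>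
     (\<forall>h. \<forall>x\<in>L. actH copH SH h x \<in> L) \<and> (\<forall>a. \<forall>x\<in>L. actA smH copH pr a x \<in> L)"

definition bicov_quot :: "(complex \<Rightarrow> 'a::ring_1 \<Rightarrow> 'a) \<Rightarrow> ('a \<Rightarrow> ('a \<times> 'a) list) \<Rightarrow> ('a \<Rightarrow> complex)
    \<Rightarrow> ('a \<Rightarrow> 'a) \<Rightarrow> 'a set \<Rightarrow> bool" where
  "bicov_quot smA copA epsA SA M \<longleftrightarrow>
     0 \<in> M \<and> (\<forall>x\<in>M. \<forall>y\<in>M. x + y \<in> M) \<and> (\<forall>c. \<forall>x\<in>M. smA c x \<in> M) \<and>
     M \<subseteq> {a. epsA a = 0} \<and>
     (\<forall>a. \<forall>m\<in>M. a * m \<in> M) \<and>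
     (\<forall>m\<in>M. in_tensor_right smA smA M (adcoact copA SA m))"

definition qtangent :: "('h::ring_1 \<Rightarrow> complex) \<Rightarrow> ('h \<Rightarrow> 'a \<Rightarrow> complex) \<Rightarrow> 'a set \<Rightarrow> 'h set" where
  "qtangent epsH pr M = {x. epsH x = 0 \<and> (\<forall>m\<in>M. pr x m = 0)}"

definition L_alpha :: "(complex \<Rightarrow> 'h::ring_1 \<Rightarrow> 'h) \<Rightarrow> ('h \<Rightarrow> ('h \<times> 'h) list) \<Rightarrow> ('h \<Rightarrow> complex)
    \<Rightarrow> ('a \<Rightarrow> complex) \<Rightarrow> ('h \<Rightarrow> 'a \<Rightarrow> complex) \<Rightarrow> 'a \<Rightarrow> 'h set" where
  "L_alpha smH copH epsH epsA pr \<alpha> =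
     {x. epsH x = 0 \<and> tsum2 (\<lambda>x1 x2. smH (pr x2 \<alpha>) x1) (copH x) = smH (epsA \<alpha>) x}"

definition L_alpha_tilde :: "('h::ring_1 \<Rightarrow> complex) \<Rightarrow> ('a::ring_1 \<Rightarrow> complex)
    \<Rightarrow> ('h \<Rightarrow> 'a \<Rightarrow> complex) \<Rightarrow> 'a \<Rightarrow> 'h set" where
  "L_alpha_tilde epsH epsA pr \<alpha> =
     {x. epsH x = 0 \<and> (\<forall>a. epsA a = 0 \<longrightarrow> pr x (a * \<alpha>) = pr x a * epsA \<alpha>)}"

definition L_alpha_1 :: "('h::ring_1 \<Rightarrow> complex) \<Rightarrow> ('a::ring_1 \<Rightarrow> complex)
    \<Rightarrow> ('h \<Rightarrow> 'a \<Rightarrow> complex) \<Rightarrow> 'a \<Rightarrow> 'h set" where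
  "L_alpha_1 epsH epsA pr \<alpha> =
     {x. epsH x = 0 \<and> (\<forall>a. epsA a = 0 \<longrightarrow> pr x (a * \<alpha>) = pr x a * (epsA \<alpha> + 1))}"

end

theory Submission
  imports Defs
begin

text \<open>The quantum tangent space of a bicovariant quotienting subspace M is stable under the
  quantum double: under h in H because M is stable under the adjoint coaction, which the pairing
  turns into <h(1) x S h(2), m> = <h (x) x, Ad m>, and under a in A because M is a left ideal in
  ker eps, since <a |> x, m> = <x, a m> - <x, a> eps m. With w = alpha - c 1, the three sets are the
  tangent spaces of A w (c = eps alpha) and of (ker eps) w (c = eps alpha, resp. eps alpha + 1).
  Ad-invariance passes from alpha to w, so Ad(a w) = a(1) S a(3) (x) a(2) w, which lies in
  A (x) M for both choices of M. The Hopf identities S (x y) = S y S x and <S h, a> = <h, S a>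
  needed on the way both follow from uniqueness of convolution inverses.\<close>

section \<open>Sweedler sums\<close>

lemma tsum2_Nil [simp]: "tsum2 f [] = 0"
  by (simp add: tsum2_def)

lemma tsum2_Cons [simp]: "tsum2 f (p # l) = f (fst p) (snd p) + tsum2 f l"
  by (simp add: tsum2_def split_beta)

lemma tsum2_append [simp]: "tsum2 f (l @ l') = tsum2 f l + tsum2 f l'"
  by (simp add: tsum2_def)

lemma tsum2_zero [simp]: "tsum2 (\<lambda>a b. 0) l = 0"
  by (induction l) auto

lemma tsum2_add: "tsum2 (\<lambda>a b. f a b + g a b) l = tsum2 f l + tsum2 g l"
  by (induction l) (auto simp: algebra_simps)

lemma tsum2_mult_left: "tsum2 (\<lambda>a b. (c :: 'z::semiring_0) * f a b) l = c * tsum2 f l"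
  by (induction l) (auto simp: algebra_simps)

lemma tsum2_mult_right: "tsum2 (\<lambda>a b. (f a b :: 'z::semiring_0) * c) l = tsum2 f l * c"
  by (induction l) (auto simp: algebra_simps)

lemma tsum2_commute:
  "tsum2 (\<lambda>a b. tsum2 (\<lambda>c d. f a b c d) l') l = tsum2 (\<lambda>c d. tsum2 (\<lambda>a b. f a b c d) l) l'"
  by (induction l) (simp_all add: tsum2_add)

lemma additive_tsum2: "additive L \<Longrightarrow> L (tsum2 f l) = tsum2 (\<lambda>a b. L (f a b)) l"
  by (induction l) (simp_all add: additive.zero additive.add)

lemma tsum2_concat_map_mult:
  "tsum2 f (concat (map (\<lambda>(a, b). map (\<lambda>(c, d). (a * c, b * d)) m) l))
     = tsum2 (\<lambda>a b. tsum2 (\<lambda>c d. f (a * c) (b * d)) m) l"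
proof -
  have "tsum2 f (map (\<lambda>(c, d). (a * c, b * d)) m) = tsum2 (\<lambda>c d. f (a * c) (b * d)) m" for a b
    by (induction m) auto
  then show ?thesis
    by (induction l) auto
qed

lemma tsum2_map_fst: "tsum2 f (map (\<lambda>(a, b). (g a, b)) l) = tsum2 (\<lambda>a b. f (g a) b) l"
  by (induction l) auto

lemma tsum3_Nil [simp]: "tsum3 t [] = 0"
  by (simp add: tsum3_def)

lemma tsum3_Cons [simp]: "tsum3 t (p # l) = t (fst p) (fst (snd p)) (snd (snd p)) + tsum3 t l"
  by (simp add: tsum3_def split_beta)

lemma tsum3_append [simp]: "tsum3 t (l @ l') = tsum3 t l + tsum3 t l'"
  by (simp add: tsum3_def)

lemma tsum3_cop2L: "tsum3 t (cop2L cop h) = tsum2 (\<lambda>a b. tsum2 (\<lambda>c d. t c d b) (cop a)) (cop h)"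
proof -
  have inner: "tsum3 t (map (\<lambda>(c, d). (c, d, b)) m) = tsum2 (\<lambda>c d. t c d b) m" for b m
    by (induction m) auto
  have "tsum3 t (concat (map (\<lambda>(a, b). map (\<lambda>(c, d). (c, d, b)) (cop a)) l))
      = tsum2 (\<lambda>a b. tsum2 (\<lambda>c d. t c d b) (cop a)) l" for l
    by (induction l) (auto simp: inner)
  then show ?thesis
    unfolding cop2L_def .
qed

lemma tsum3_cop2R: "tsum3 t (cop2R cop h) = tsum2 (\<lambda>a b. tsum2 (\<lambda>c d. t a c d) (cop b)) (cop h)"
proof -
  have inner: "tsum3 t (map (Pair a) m) = tsum2 (t a) m" for a m
    by (induction m) auto
  have "tsum3 t (concat (map (\<lambda>(a, b). map (\<lambda>(c, d). (a, c, d)) (cop b)) l))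
      = tsum2 (\<lambda>a b. tsum2 (\<lambda>c d. t a c d) (cop b)) l" for l
    by (induction l) (auto simp: inner)
  then show ?thesis
    unfolding cop2R_def .
qed

lemma tsum2_adcoact:
  "tsum2 f (adcoact cop S v) = tsum2 (\<lambda>v1 v2. tsum2 (\<lambda>v11 v12. f (v11 * S v2) v12) (cop v1)) (cop v)"
proof -
  have inner: "tsum2 f (map (\<lambda>(b, c, d). (b * S d, c)) (map (\<lambda>(c, d). (c, d, b)) m))
      = tsum2 (\<lambda>c d. f (c * S b) d) m" for b m
    by (induction m) auto
  have "tsum2 f (map (\<lambda>(b, c, d). (b * S d, c)) (concat (map (\<lambda>(a, b). map (\<lambda>(c, d). (c, d, b)) (cop a)) l)))
      = tsum2 (\<lambda>v1 v2. tsum2 (\<lambda>v11 v12. f (v11 * S v2) v12) (cop v1)) l" for l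
    by (induction l) (auto simp: inner simp del: map_map)
  then show ?thesis
    unfolding adcoact_def cop2L_def .
qed

section \<open>Multilinear maps\<close>

lemma lin_fun_additive: "lin_fun sm f \<Longrightarrow> additive f"
  by (simp add: lin_fun_def additive_def)

lemma lin_map_additive: "lin_map smx smy f \<Longrightarrow> additive f"
  by (simp add: lin_map_def additive_def)

lemma lin_fun_eq_lin_map_times: "lin_fun sm f = lin_map sm (*) f"
  by (simp add: lin_fun_def lin_map_def)

lemma vector_space_times: "vector_space ((*) :: complex \<Rightarrow> complex \<Rightarrow> complex)"
  by unfold_locales (simp_all add: algebra_simps)

lemma is_alg_times: "is_alg ((*) :: complex \<Rightarrow> complex \<Rightarrow> complex)"
  by (simp add: is_alg_def vector_space_times)

lemma eq_if_lin_fun_eq: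
  assumes "vector_space sm" "\<And>f. lin_fun sm f \<Longrightarrow> f u = f v"
  shows "u = v"
proof -
  interpret vector_space sm
    by fact
  obtain B where B: "independent B" "span B = UNIV"
    using basis_exists[of UNIV] by (metis top.extremum_uniqueI)
  have "lin_fun sm (\<lambda>z. representation B z b)" for b
  proof -
    interpret coordinate: Vector_Spaces.linear sm "(*)" "\<lambda>z. representation B z b"
      using linear_representation B by blast
    show ?thesis
      by (simp add: lin_fun_def coordinate.add coordinate.scale)
  qed
  then have "representation B u b = representation B v b" for b
    using assms(2) by blast
  then have "representation B (u - v) = (\<lambda>b. 0)"
    using B by (simp add: representation_diff)
  then have "u - v = 0"
    using sum_nonzero_representation_eq[of B "u - v"] B by auto
  then show ?thesis
    by simp
qed

definition bilin_map :: "(complex \<Rightarrow> 'x::ab_group_add \<Rightarrow> 'x) \<Rightarrow> (complex \<Rightarrow> 'y::ab_group_add \<Rightarrow> 'y)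
    \<Rightarrow> (complex \<Rightarrow> 'r::ab_group_add \<Rightarrow> 'r) \<Rightarrow> ('x \<Rightarrow> 'y \<Rightarrow> 'r) \<Rightarrow> bool" where
  "bilin_map smx smy smr g \<longleftrightarrow> (\<forall>y. lin_map smx smr (\<lambda>x. g x y)) \<and> (\<forall>x. lin_map smy smr (g x))"

definition trilin_map :: "(complex \<Rightarrow> 'x::ab_group_add \<Rightarrow> 'x) \<Rightarrow> (complex \<Rightarrow> 'r::ab_group_add \<Rightarrow> 'r)
    \<Rightarrow> ('x \<Rightarrow> 'x \<Rightarrow> 'x \<Rightarrow> 'r) \<Rightarrow> bool" where
  "trilin_map smx smr t \<longleftrightarrow> (\<forall>y z. lin_map smx smr (\<lambda>x. t x y z))
     \<and> (\<forall>x z. lin_map smx smr (\<lambda>y. t x y z)) \<and> (\<forall>x y. lin_map smx smr (t x y))"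

lemma bilin_eq_bilin_map_times: "bilin smx smy f = bilin_map smx smy (*) f"
  by (simp add: bilin_def bilin_map_def lin_fun_eq_lin_map_times)

lemma bilin_mapD:
  assumes "bilin_map smx smy smr g"
  shows "g (x + x') y = g x y + g x' y" "g (smx c x) y = smr c (g x y)"
    and "g x (y + y') = g x y + g x y'" "g x (smy c y) = smr c (g x y)"
  using assms by (simp_all add: bilin_map_def lin_map_def)

lemma bilin_map_diff_zero:
  assumes "bilin_map smx smy smr g"
  shows "g (x - x') y = g x y - g x' y" "g x (y - y') = g x y - g x y'"
    and "g 0 y = 0" "g x 0 = 0"
proof -
  have "additive (\<lambda>x. g x y)" "additive (g x)" for x y
    using assms unfolding bilin_map_def by (auto intro: lin_map_additive)
  from additive.diff[OF this(1)] additive.diff[OF this(2)] additive.zero[OF this(1)] additive.zero[OF this(2)]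
  show "g (x - x') y = g x y - g x' y" "g x (y - y') = g x y - g x y'" "g 0 y = 0" "g x 0 = 0"
    by simp_all
qed

lemma lin_fun_comp_lin_map: "lin_fun smr f \<Longrightarrow> lin_map smx smr g \<Longrightarrow> lin_fun smx (\<lambda>x. f (g x))"
  by (simp add: lin_fun_def lin_map_def)

lemma lin_map_tsum2:
  assumes "vector_space smr" and "\<And>a b. lin_map smx smr (\<lambda>x. h x a b)"
  shows "lin_map smx smr (\<lambda>x. tsum2 (h x) l)"
proof -
  interpret vector_space smr
    by (rule assms(1))
  show ?thesis
    using assms(2) by (induction l) (simp_all add: lin_map_def scale_right_distrib)
qed

lemma (in vector_space) tsum2_scale: "tsum2 (\<lambda>a b. scale c (f a b)) l = scale c (tsum2 f l)"
  by (induction l) (simp_all add: scale_right_distrib)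

text \<open>Tensor identities, stated for scalar functionals, transfer to vector-valued
  multilinear maps because linear functionals separate the points of any vector space.\<close>

lemma teq2_tsum2_eq:
  assumes "teq2 smx smy r s" "vector_space smr" "bilin_map smx smy smr g"
  shows "tsum2 g r = tsum2 g s"
proof (rule eq_if_lin_fun_eq[OF assms(2)])
  fix f assume f: "lin_fun smr f"
  then have "bilin smx smy (\<lambda>a b. f (g a b))"
    using assms(3) by (auto simp: bilin_def bilin_map_def intro: lin_fun_comp_lin_map)
  then show "f (tsum2 g r) = f (tsum2 g s)"
    using assms(1) f by (simp add: teq2_def additive_tsum2 lin_fun_additive)
qed

lemma teq3_tsum3_eq:
  assumes "teq3 smx r s" "vector_space smr" "trilin_map smx smr t"
  shows "tsum3 t r = tsum3 t s"
proof (rule eq_if_lin_fun_eq[OF assms(2)])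
  fix f assume f: "lin_fun smr f"
  then have "trilin smx (\<lambda>a b c. f (t a b c))"
    using assms(3) by (auto simp: trilin_def trilin_map_def intro: lin_fun_comp_lin_map)
  moreover have "f (tsum3 t l) = tsum3 (\<lambda>a b c. f (t a b c)) l" for l
    using lin_fun_additive[OF f] by (induction l) (simp_all add: additive.zero additive.add)
  ultimately show "f (tsum3 t r) = f (tsum3 t s)"
    using assms(1) by (simp add: teq3_def)
qed

section \<open>Hopf algebras\<close>

locale complex_algebra =
  fixes sm :: "complex \<Rightarrow> 'x::ring_1 \<Rightarrow> 'x"
  assumes is_alg: "is_alg sm"
begin

sublocale vector_space sm
  using is_alg by (simp add: is_alg_def)

lemma scale_mult_left [simp]: "sm c x * y = sm c (x * y)"
  using is_alg by (simp add: is_alg_def)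

lemma scale_mult_right [simp]: "x * sm c y = sm c (x * y)"
  using is_alg by (simp add: is_alg_def)

end

locale hopf =
  fixes sm :: "complex \<Rightarrow> 'x::ring_1 \<Rightarrow> 'x" and cop :: "'x \<Rightarrow> ('x \<times> 'x) list"
    and eps :: "'x \<Rightarrow> complex" and S :: "'x \<Rightarrow> 'x"
  assumes hopf_alg: "hopf_alg sm cop eps S"
begin

sublocale complex_algebra sm
  using hopf_alg by (simp add: complex_algebra_def hopf_alg_def)

sublocale eps: additive eps
  using hopf_alg unfolding hopf_alg_def by (blast intro: lin_fun_additive)

sublocale antipode: additive S
  using hopf_alg unfolding hopf_alg_def by (blast intro: lin_map_additive)

declare eps.add [simp] eps.zero [simp] eps.diff [simp] antipode.add [simp] antipode.diff [simp]

lemma eps_scale [simp]: "eps (sm c x) = c * eps x"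
  using hopf_alg by (simp add: hopf_alg_def lin_fun_def)

lemma eps_mult [simp]: "eps (x * y) = eps x * eps y"
  using hopf_alg by (simp add: hopf_alg_def)

lemma eps_one [simp]: "eps 1 = 1"
  using hopf_alg by (simp add: hopf_alg_def)

lemma antipode_scale [simp]: "S (sm c x) = sm c (S x)"
  using hopf_alg by (simp add: hopf_alg_def lin_map_def)

lemma antipode_left: "tsum2 (\<lambda>a b. S a * b) (cop h) = sm (eps h) 1"
  using hopf_alg by (simp add: hopf_alg_def)

lemma antipode_right: "tsum2 (\<lambda>a b. a * S b) (cop h) = sm (eps h) 1"
  using hopf_alg by (simp add: hopf_alg_def)

lemma counit_left: "lin_map sm smr L \<Longrightarrow> tsum2 (\<lambda>a b. smr (eps a) (L b)) (cop h) = L h"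
  using hopf_alg additive_tsum2[OF lin_map_additive, of sm smr L "\<lambda>a b. sm (eps a) b" "cop h"]
  by (simp add: hopf_alg_def lin_map_def)

lemma counit_right: "lin_map sm smr L \<Longrightarrow> tsum2 (\<lambda>a b. smr (eps b) (L a)) (cop h) = L h"
  using hopf_alg additive_tsum2[OF lin_map_additive, of sm smr L "\<lambda>a b. sm (eps b) a" "cop h"]
  by (simp add: hopf_alg_def lin_map_def)

context
  fixes smr :: "complex \<Rightarrow> 'r::ab_group_add \<Rightarrow> 'r" and g :: "'x \<Rightarrow> 'x \<Rightarrow> 'r"
  assumes vs: "vector_space smr" and g: "bilin_map sm sm smr g"
begin

lemma tsum2_cop_add: "tsum2 g (cop (x + y)) = tsum2 g (cop x) + tsum2 g (cop y)"
proof -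
  have "teq2 sm sm (cop (x + y)) (cop x @ cop y)"
    using hopf_alg by (simp add: hopf_alg_def)
  from teq2_tsum2_eq[OF this vs g] show ?thesis
    by simp
qed

lemma tsum2_cop_scale: "tsum2 g (cop (sm c x)) = smr c (tsum2 g (cop x))"
proof -
  have "teq2 sm sm (cop (sm c x)) (map (\<lambda>(a, b). (sm c a, b)) (cop x))"
    using hopf_alg by (simp add: hopf_alg_def)
  from teq2_tsum2_eq[OF this vs g]
  have "tsum2 g (cop (sm c x)) = tsum2 g (map (\<lambda>(a, b). (sm c a, b)) (cop x))" .
  also have "\<dots> = tsum2 (\<lambda>a b. smr c (g a b)) (cop x)"
    by (simp add: tsum2_map_fst bilin_mapD[OF g])
  also have "\<dots> = smr c (tsum2 g (cop x))"
    by (rule vector_space.tsum2_scale[OF vs])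
  finally show ?thesis .
qed

lemma lin_map_tsum2_cop: "lin_map sm smr (\<lambda>x. tsum2 g (cop x))"
  by (simp add: lin_map_def tsum2_cop_add tsum2_cop_scale)

lemma tsum2_cop_mult: "tsum2 g (cop (x * y)) = tsum2 (\<lambda>a b. tsum2 (\<lambda>c d. g (a * c) (b * d)) (cop y)) (cop x)"
proof -
  have "teq2 sm sm (cop (x * y)) (concat (map (\<lambda>(a, b). map (\<lambda>(c, d). (a * c, b * d)) (cop y)) (cop x)))"
    using hopf_alg by (simp add: hopf_alg_def)
  from teq2_tsum2_eq[OF this vs g] show ?thesis
    by (simp add: tsum2_concat_map_mult)
qed

lemma tsum2_cop_one: "tsum2 g (cop 1) = g 1 1"
proof -
  have "teq2 sm sm (cop 1) [(1, 1)]"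
    using hopf_alg by (simp add: hopf_alg_def)
  from teq2_tsum2_eq[OF this vs g] show ?thesis
    by simp
qed

end

lemma tsum2_coassoc:
  assumes "vector_space smr" "trilin_map sm smr t"
  shows "tsum2 (\<lambda>a b. tsum2 (\<lambda>c d. t c d b) (cop a)) (cop h)
       = tsum2 (\<lambda>a b. tsum2 (\<lambda>c d. t a c d) (cop b)) (cop h)"
proof -
  have "teq3 sm (cop2L cop h) (cop2R cop h)"
    using hopf_alg by (simp add: hopf_alg_def)
  from teq3_tsum3_eq[OF this assms] show ?thesis
    by (simp add: tsum3_cop2L tsum3_cop2R)
qed

end

section \<open>Convolution\<close>

text \<open>A map of two arguments, linear in each, stands for a linear map on the tensor
  product coalgebra of X and Y; conv is the convolution product of such maps.\<close>

definition conv :: "('x \<Rightarrow> ('x \<times> 'x) list) \<Rightarrow> ('y \<Rightarrow> ('y \<times> 'y) list)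
    \<Rightarrow> ('x \<Rightarrow> 'y \<Rightarrow> 'r::ring_1) \<Rightarrow> ('x \<Rightarrow> 'y \<Rightarrow> 'r) \<Rightarrow> 'x \<Rightarrow> 'y \<Rightarrow> 'r" where
  "conv copX copY F G x y = tsum2 (\<lambda>x1 x2. tsum2 (\<lambda>y1 y2. F x1 y1 * G x2 y2) (copY y)) (copX x)"

locale convolution = X: hopf smX copX epsX SX + Y: hopf smY copY epsY SY + R: complex_algebra smR
  for smX :: "complex \<Rightarrow> 'x::ring_1 \<Rightarrow> 'x" and copX epsX SX
    and smY :: "complex \<Rightarrow> 'y::ring_1 \<Rightarrow> 'y" and copY epsY SY
    and smR :: "complex \<Rightarrow> 'r::ring_1 \<Rightarrow> 'r"
begin

abbreviation conv_unit :: "'x \<Rightarrow> 'y \<Rightarrow> 'r" where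
  "conv_unit x y \<equiv> smR (epsX x * epsY y) 1"

lemma conv_unit_right:
  assumes F: "bilin_map smX smY smR F"
  shows "conv copX copY F conv_unit = F"
proof (intro ext)
  fix x y
  have "conv copX copY F conv_unit x y
      = tsum2 (\<lambda>x1 x2. smR (epsX x2) (tsum2 (\<lambda>y1 y2. smR (epsY y2) (F x1 y1)) (copY y))) (copX x)"
    by (simp add: conv_def R.tsum2_scale[symmetric])
  also have "\<dots> = F x y"
    using F X.counit_right[of smR "\<lambda>x1. F x1 y"] Y.counit_right[of smR "F _"]
    by (simp add: bilin_map_def)
  finally show "conv copX copY F conv_unit x y = F x y" .
qed

lemma conv_unit_left:
  assumes F: "bilin_map smX smY smR F"
  shows "conv copX copY conv_unit F = F"
proof (intro ext)
  fix x y
  have "conv copX copY conv_unit F x y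
      = tsum2 (\<lambda>x1 x2. smR (epsX x1) (tsum2 (\<lambda>y1 y2. smR (epsY y1) (F x2 y2)) (copY y))) (copX x)"
    by (simp add: conv_def R.tsum2_scale[symmetric])
  also have "\<dots> = F x y"
    using F X.counit_left[of smR "\<lambda>x2. F x2 y"] Y.counit_left[of smR "F _"]
    by (simp add: bilin_map_def)
  finally show "conv copX copY conv_unit F x y = F x y" .
qed

lemma conv_assoc:
  assumes F: "bilin_map smX smY smR F" and G: "bilin_map smX smY smR G" and K: "bilin_map smX smY smR K"
  shows "conv copX copY (conv copX copY F G) K = conv copX copY F (conv copX copY G K)"
proof (intro ext)
  fix x y
  note multilin = bilin_mapD[OF F] bilin_mapD[OF G] bilin_mapD[OF K]
    distrib_left distrib_right tsum2_add R.tsum2_scale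
  define T where "T a b c = tsum2 (\<lambda>y1 y2. tsum2 (\<lambda>y11 y12. F a y11 * G b y12 * K c y2) (copY y1)) (copY y)"
    for a b c
  have "trilin_map smX smR T"
    unfolding trilin_map_def lin_map_def T_def by (simp add: multilin)
  note X_coassoc = X.tsum2_coassoc[OF R.vector_space_axioms this]
  have "trilin_map smY smR (\<lambda>p q r. F a p * G b q * K c r)" for a b c
    unfolding trilin_map_def lin_map_def by (simp add: multilin)
  note Y_coassoc = Y.tsum2_coassoc[OF R.vector_space_axioms this]
  have "conv copX copY (conv copX copY F G) K x y
      = tsum2 (\<lambda>x1 x2. tsum2 (\<lambda>y1 y2. tsum2 (\<lambda>x11 x12. tsum2 (\<lambda>y11 y12.
          F x11 y11 * G x12 y12 * K x2 y2) (copY y1)) (copX x1)) (copY y)) (copX x)"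
    by (simp add: conv_def tsum2_mult_right)
  also have "\<dots> = tsum2 (\<lambda>x1 x2. tsum2 (\<lambda>x11 x12. T x11 x12 x2) (copX x1)) (copX x)"
    unfolding T_def by (simp only: tsum2_commute[where l = "copY y"])
  also have "\<dots> = tsum2 (\<lambda>x1 x2. tsum2 (\<lambda>x21 x22. T x1 x21 x22) (copX x2)) (copX x)"
    by (rule X_coassoc)
  also have "\<dots> = tsum2 (\<lambda>x1 x2. tsum2 (\<lambda>x21 x22. tsum2 (\<lambda>y1 y2. tsum2 (\<lambda>y21 y22.
          F x1 y1 * G x21 y21 * K x22 y22) (copY y2)) (copY y)) (copX x2)) (copX x)"
    unfolding T_def Y_coassoc ..
  also have "\<dots> = conv copX copY F (conv copX copY G K) x y"
    by (simp add: conv_def tsum2_mult_left mult.assoc tsum2_commute[where l' = "copY y"])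
  finally show "conv copX copY (conv copX copY F G) K x y = conv copX copY F (conv copX copY G K) x y" .
qed

lemma conv_inverse_unique:
  assumes F: "bilin_map smX smY smR F" and P: "bilin_map smX smY smR P" and G: "bilin_map smX smY smR G"
    and FP: "conv copX copY F P = conv_unit"
    and PG: "conv copX copY P G = conv_unit"
  shows "F = G"
proof -
  have "F = conv copX copY F (conv copX copY P G)"
    unfolding PG conv_unit_right[OF F] ..
  also have "\<dots> = conv copX copY (conv copX copY F P) G"
    by (rule conv_assoc[OF F P G, symmetric])
  also have "\<dots> = G"
    unfolding FP conv_unit_left[OF G] ..
  finally show ?thesis .
qed

end

context hopf
begin

lemma bilin_map_antipode_mult: "bilin_map sm sm sm (\<lambda>a b. S a * b)"
  by (simp add: bilin_map_def lin_map_def distrib_left distrib_right)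

lemma antipode_one [simp]: "S 1 = 1"
proof -
  have "tsum2 (\<lambda>a b. S a * b) (cop 1) = S 1 * 1"
    by (rule tsum2_cop_one[OF vector_space_axioms bilin_map_antipode_mult])
  then show ?thesis
    using antipode_left[of 1] by simp
qed

text \<open>The maps x (x) y |-> S (x y) and x (x) y |-> S y S x are a left and a right
  convolution inverse of the multiplication, hence equal.\<close>

lemma antipode_mult: "S (x * y) = S y * S x"
proof -
  interpret convolution sm cop eps S sm cop eps S sm ..
  have bilin: "bilin_map sm sm sm (\<lambda>x y. S (x * y))" "bilin_map sm sm sm (*)"
      "bilin_map sm sm sm (\<lambda>x y. S y * S x)"
    by (simp_all add: bilin_map_def lin_map_def distrib_left distrib_right)
  have "(\<lambda>x y. S (x * y)) = (\<lambda>x y. S y * S x)"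
  proof (rule conv_inverse_unique[OF bilin])
    show "conv cop cop (\<lambda>x y. S (x * y)) (*) = (\<lambda>x y. sm (eps x * eps y) 1)"
    proof (intro ext)
      fix x y
      have "conv cop cop (\<lambda>x y. S (x * y)) (*) x y = tsum2 (\<lambda>a b. S a * b) (cop (x * y))"
        unfolding conv_def
        by (rule tsum2_cop_mult[OF vector_space_axioms bilin_map_antipode_mult, symmetric])
      then show "conv cop cop (\<lambda>x y. S (x * y)) (*) x y = sm (eps x * eps y) 1"
        by (simp add: antipode_left)
    qed
    show "conv cop cop (*) (\<lambda>x y. S y * S x) = (\<lambda>x y. sm (eps x * eps y) 1)"
    proof (intro ext)
      fix x y
      have "conv cop cop (*) (\<lambda>x y. S y * S x) x y
          = tsum2 (\<lambda>x1 x2. x1 * tsum2 (\<lambda>y1 y2. y1 * S y2) (cop y) * S x2) (cop x)"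
        by (simp add: conv_def tsum2_mult_left[symmetric] tsum2_mult_right mult.assoc[symmetric])
      also have "\<dots> = sm (eps y) (tsum2 (\<lambda>x1 x2. x1 * S x2) (cop x))"
        by (simp add: antipode_right tsum2_scale)
      finally show "conv cop cop (*) (\<lambda>x y. S y * S x) x y = sm (eps x * eps y) 1"
        by (simp add: antipode_right mult.commute)
    qed
  qed
  then show ?thesis
    by metis
qed

end

section \<open>The adjoint coaction and bicovariant quotients\<close>

definition ad_invariant :: "(complex \<Rightarrow> 'x::ring_1 \<Rightarrow> 'x) \<Rightarrow> ('x \<Rightarrow> ('x \<times> 'x) list) \<Rightarrow> ('x \<Rightarrow> 'x)
    \<Rightarrow> 'x \<Rightarrow> bool" where
  "ad_invariant sm cop S c \<longleftrightarrow> teq2 sm sm (adcoact cop S c) [(1, c)]"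

context hopf
begin

lemma bilin_map_tsum2_cop_antipode:
  assumes f: "bilin_map sm sm (*) f"
  shows "bilin_map sm sm (*) (\<lambda>p q. tsum2 (\<lambda>r s. f (r * S q) s) (cop p))"
proof -
  have "bilin_map sm sm (*) (\<lambda>r s. f (r * S q) s)" for q
    by (simp add: bilin_map_def lin_map_def bilin_mapD[OF f] distrib_right)
  moreover have "lin_map sm (*) (\<lambda>q. tsum2 (\<lambda>r s. f (r * S q) s) (cop p))" for p
    by (rule lin_map_tsum2[OF vector_space_times])
      (simp add: lin_map_def bilin_mapD[OF f] distrib_left)
  ultimately show ?thesis
    using lin_map_tsum2_cop[OF vector_space_times] by (simp add: bilin_map_def)
qed

lemma lin_fun_tsum2_adcoact:
  assumes "bilin sm sm f"
  shows "lin_fun sm (\<lambda>v. tsum2 f (adcoact cop S v))"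
  using lin_map_tsum2_cop[OF vector_space_times bilin_map_tsum2_cop_antipode] assms
  by (simp add: tsum2_adcoact lin_fun_eq_lin_map_times bilin_eq_bilin_map_times)

lemma tsum2_adcoact_one:
  assumes "bilin sm sm f"
  shows "tsum2 f (adcoact cop S 1) = f 1 1"
  using assms tsum2_cop_one[OF vector_space_times bilin_map_tsum2_cop_antipode]
    tsum2_cop_one[OF vector_space_times, of f]
  by (simp add: tsum2_adcoact bilin_eq_bilin_map_times)

lemma ad_invariant_diff_scale_one:
  assumes "ad_invariant sm cop S c"
  shows "ad_invariant sm cop S (c - sm e 1)"
  unfolding ad_invariant_def teq2_def
proof (intro allI impI)
  fix f assume f: "bilin sm sm f"
  note lin = lin_fun_tsum2_adcoact[OF f]
  have "tsum2 f (adcoact cop S (c - sm e 1)) = tsum2 f (adcoact cop S c) - e * tsum2 f (adcoact cop S 1)"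
    using additive.diff[OF lin_fun_additive[OF lin]] lin by (simp add: lin_fun_def)
  also have "\<dots> = f 1 c - e * f 1 1"
    using assms f by (simp add: ad_invariant_def teq2_def tsum2_adcoact_one)
  also have "\<dots> = f 1 (c - sm e 1)"
    using f by (simp add: bilin_eq_bilin_map_times bilin_mapD bilin_map_diff_zero)
  finally show "tsum2 f (adcoact cop S (c - sm e 1)) = tsum2 f [(1, c - sm e 1)]"
    by simp
qed

lemma tsum2_adcoact_mult_ad_invariant:
  assumes f: "bilin sm sm f" and w: "ad_invariant sm cop S w"
  shows "tsum2 f (adcoact cop S (a * w))
       = tsum2 (\<lambda>a1 a2. tsum2 (\<lambda>a11 a12. f (a11 * S a2) (a12 * w)) (cop a1)) (cop a)"
proof -
  have f': "bilin_map sm sm (*) f"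
    using f by (simp add: bilin_eq_bilin_map_times)
  have f_right: "bilin_map sm sm (*) (\<lambda>r s. f (r * X) s)" for X
    by (simp add: bilin_map_def lin_map_def bilin_mapD[OF f'] distrib_right)
  have w_inv: "tsum2 (\<lambda>b1 b2. tsum2 (\<lambda>b11 b12. f (a11 * (b11 * S b2) * S a2) (a12 * b12)) (cop b1)) (cop w)
      = f (a11 * S a2) (a12 * w)" for a11 a12 a2
  proof -
    have "bilin sm sm (\<lambda>u v. f (a11 * u * S a2) (a12 * v))"
      unfolding bilin_eq_bilin_map_times bilin_map_def lin_map_def
      by (simp add: bilin_mapD[OF f'] distrib_left distrib_right)
    with w have "tsum2 (\<lambda>u v. f (a11 * u * S a2) (a12 * v)) (adcoact cop S w) = f (a11 * 1 * S a2) (a12 * w)"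
      by (simp add: ad_invariant_def teq2_def)
    then show ?thesis
      by (simp only: tsum2_adcoact mult_1_right)
  qed
  have "tsum2 f (adcoact cop S (a * w)) = tsum2 (\<lambda>a1 a2. tsum2 (\<lambda>b1 b2.
      tsum2 (\<lambda>r s. f (r * S (a2 * b2)) s) (cop (a1 * b1))) (cop w)) (cop a)"
    unfolding tsum2_adcoact
    by (rule tsum2_cop_mult[OF vector_space_times bilin_map_tsum2_cop_antipode[OF f']])
  also have "\<dots> = tsum2 (\<lambda>a1 a2. tsum2 (\<lambda>b1 b2. tsum2 (\<lambda>a11 a12. tsum2 (\<lambda>b11 b12.
      f (a11 * (b11 * S b2) * S a2) (a12 * b12)) (cop b1)) (cop a1)) (cop w)) (cop a)"
    by (simp only: tsum2_cop_mult[OF vector_space_times f_right] antipode_mult mult.assoc)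
  also have "\<dots> = tsum2 (\<lambda>a1 a2. tsum2 (\<lambda>a11 a12. tsum2 (\<lambda>b1 b2. tsum2 (\<lambda>b11 b12.
      f (a11 * (b11 * S b2) * S a2) (a12 * b12)) (cop b1)) (cop w)) (cop a1)) (cop a)"
    by (simp only: tsum2_commute[where l = "cop w"])
  also have "\<dots> = tsum2 (\<lambda>a1 a2. tsum2 (\<lambda>a11 a12. f (a11 * S a2) (a12 * w)) (cop a1)) (cop a)"
    by (simp only: w_inv)
  finally show ?thesis .
qed

end

definition left_ideal :: "(complex \<Rightarrow> 'x::ring_1 \<Rightarrow> 'x) \<Rightarrow> 'x set \<Rightarrow> bool" where
  "left_ideal sm N \<longleftrightarrow> 0 \<in> N \<and> (\<forall>x\<in>N. \<forall>y\<in>N. x + y \<in> N) \<and> (\<forall>c. \<forall>x\<in>N. sm c x \<in> N)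
     \<and> (\<forall>a. \<forall>x\<in>N. a * x \<in> N)"

lemma bicov_quot_iff:
  "bicov_quot sm cop eps S M \<longleftrightarrow> left_ideal sm M \<and> M \<subseteq> {a. eps a = 0}
     \<and> (\<forall>m\<in>M. in_tensor_right sm sm M (adcoact cop S m))"
  by (auto simp: bicov_quot_def left_ideal_def)

context complex_algebra
begin

lemma left_ideal_UNIV: "left_ideal sm UNIV"
  by (simp add: left_ideal_def)

lemma left_ideal_right_multiples:
  assumes "left_ideal sm N"
  shows "left_ideal sm {a * w | a. a \<in> N}"
proof -
  let ?M = "{a * w | a. a \<in> N}"
  have N: "0 \<in> N" "\<And>x y. x \<in> N \<Longrightarrow> y \<in> N \<Longrightarrow> x + y \<in> N"
      "\<And>c x. x \<in> N \<Longrightarrow> sm c x \<in> N" "\<And>b x. x \<in> N \<Longrightarrow> b * x \<in> N"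
    using assms by (auto simp: left_ideal_def)
  have "0 * w \<in> ?M"
    using N(1) by blast
  moreover have "a * w + a' * w \<in> ?M" if "a \<in> N" "a' \<in> N" for a a'
  proof -
    have "(a + a') * w \<in> ?M"
      using N(2)[OF that] by blast
    then show ?thesis
      by (simp add: distrib_right)
  qed
  moreover have "sm c (a * w) \<in> ?M" if "a \<in> N" for c a
  proof -
    have "sm c a * w \<in> ?M"
      using N(3)[OF that] by blast
    then show ?thesis
      by simp
  qed
  moreover have "b * (a * w) \<in> ?M" if "a \<in> N" for a b
  proof -
    have "(b * a) * w \<in> ?M"
      using N(4)[OF that] by blast
    then show ?thesis
      by (simp add: mult.assoc)
  qed
  ultimately show ?thesis
    unfolding left_ideal_def by auto
qed

end

context hopf
begin

lemma left_ideal_kernel: "left_ideal sm {a. eps a = 0}"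
  by (simp add: left_ideal_def)

lemma bicov_quot_right_multiples:
  assumes w: "ad_invariant sm cop S w" and "eps w = 0"
  shows "bicov_quot sm cop eps S {a * w | a. True}"
proof -
  let ?M = "{a * w | a. True}"
  have "left_ideal sm ?M"
    using left_ideal_right_multiples[OF left_ideal_UNIV] by simp
  moreover have "in_tensor_right sm sm ?M (adcoact cop S (a * w))" for a
    unfolding in_tensor_right_def
  proof (intro allI impI, elim conjE)
    fix f assume f: "bilin sm sm f" and "\<forall>x. \<forall>m\<in>?M. f x m = 0"
    then have "f u (b * w) = 0" for u b
      by blast
    then show "tsum2 f (adcoact cop S (a * w)) = 0"
      by (simp add: tsum2_adcoact_mult_ad_invariant[OF f w])
  qed
  ultimately show ?thesis
    using assms(2) by (auto simp: bicov_quot_iff)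
qed

text \<open>For a(2) in the kernel, splitting a(2) = (a(2) - eps a(2)) + eps a(2) leaves only the
  term eps(a(2)) f(a(1) S a(3), w), which sums to eps(a) f(1, w) = 0.\<close>

lemma bicov_quot_kernel_right_multiples:
  assumes w: "ad_invariant sm cop S w"
  shows "bicov_quot sm cop eps S {a * w | a. eps a = 0}"
proof -
  let ?M = "{a * w | a. eps a = 0}"
  have "left_ideal sm ?M"
    using left_ideal_right_multiples[OF left_ideal_kernel] by simp
  moreover have "in_tensor_right sm sm ?M (adcoact cop S (a * w))" if a: "eps a = 0" for a
    unfolding in_tensor_right_def
  proof (intro allI impI, elim conjE)
    fix f assume f: "bilin sm sm f" and vanish: "\<forall>x. \<forall>m\<in>?M. f x m = 0"
    note f' = f[unfolded bilin_eq_bilin_map_times]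
    have split: "f u (b * w) = eps b * f u w" for u b
    proof -
      have "(b - sm (eps b) 1) * w \<in> ?M"
        by auto
      then have "f u ((b - sm (eps b) 1) * w) = 0"
        using vanish by blast
      then show ?thesis
        by (simp add: left_diff_distrib bilin_map_diff_zero[OF f'] bilin_mapD[OF f'])
    qed
    have lin: "lin_map sm (*) (\<lambda>z. f (z * S a2) w)" for a2
      by (simp add: lin_map_def bilin_mapD[OF f'] distrib_right)
    have "tsum2 f (adcoact cop S (a * w)) = tsum2 (\<lambda>a1 a2. f (a1 * S a2) w) (cop a)"
      by (simp add: tsum2_adcoact_mult_ad_invariant[OF f w] split counit_right[OF lin])
    also have "\<dots> = f (tsum2 (\<lambda>a1 a2. a1 * S a2) (cop a)) w"
    proof -
      have "additive (\<lambda>z. f z w)"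
        by (simp add: additive_def bilin_mapD[OF f'])
      from additive_tsum2[OF this] show ?thesis
        by (rule sym)
    qed
    also have "\<dots> = 0"
      using a by (simp add: antipode_right bilin_map_diff_zero[OF f'])
    finally show "tsum2 f (adcoact cop S (a * w)) = 0" .
  qed
  ultimately show ?thesis
    by (auto simp: bicov_quot_iff)
qed

lemma right_multiples_diff_scale_one:
  "{a * (c - sm e 1) | a. P a} = {a * c - sm e a | a. P a}"
  by (simp add: right_diff_distrib)

end

section \<open>Paired Hopf algebras and quantum tangent spaces\<close>

locale hopf_pair = H: hopf smH copH epsH SH + A: hopf smA copA epsA SA
  for smH :: "complex \<Rightarrow> 'h::ring_1 \<Rightarrow> 'h" and copH epsH SH
    and smA :: "complex \<Rightarrow> 'a::ring_1 \<Rightarrow> 'a" and copA epsA SA +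
  fixes pr :: "'h \<Rightarrow> 'a \<Rightarrow> complex"
  assumes pairing: "hopf_pairing smH copH epsH smA copA epsA pr"
begin

lemma bilin_map_pr: "bilin_map smH smA (*) pr"
  using pairing by (simp add: hopf_pairing_def bilin_eq_bilin_map_times)

lemmas pr_linear [simp] = bilin_mapD[OF bilin_map_pr] bilin_map_diff_zero[OF bilin_map_pr]

lemma pr_tsum2_left [simp]: "pr (tsum2 f l) a = tsum2 (\<lambda>x y. pr (f x y) a) l"
  by (rule additive_tsum2) (simp add: additive_def)

lemma pr_tsum2_right [simp]: "pr h (tsum2 f l) = tsum2 (\<lambda>x y. pr h (f x y)) l"
  by (rule additive_tsum2) (simp add: additive_def)

lemma pr_mult_left: "pr (h * g) a = tsum2 (\<lambda>a1 a2. pr h a1 * pr g a2) (copA a)"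
  using pairing by (simp add: hopf_pairing_def)

lemma pr_mult_right: "pr h (a * b) = tsum2 (\<lambda>h1 h2. pr h1 a * pr h2 b) (copH h)"
  using pairing by (simp add: hopf_pairing_def)

lemma pr_one_left [simp]: "pr 1 a = epsA a"
  using pairing by (simp add: hopf_pairing_def)

lemma pr_one_right [simp]: "pr h 1 = epsH h"
  using pairing by (simp add: hopf_pairing_def)

lemma pr_eqI_left:
  assumes "\<And>a. pr h a = pr h' a"
  shows "h = h'"
proof -
  have "pr (h - h') a = 0" for a
    using assms by simp
  moreover have "\<forall>h. (\<forall>a. pr h a = 0) \<longrightarrow> h = 0"
    using pairing by (simp add: hopf_pairing_def)
  ultimately have "h - h' = 0"
    by blast
  then show ?thesis
    by simp
qed

text \<open>Both sides are convolution inverses of the pairing, viewed as a functional on H (x) A.\<close>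

lemma pr_antipode: "pr (SH h) a = pr h (SA a)"
proof -
  interpret convolution smH copH epsH SH smA copA epsA SA "(*)"
    using is_alg_times by unfold_locales
  have bilin: "bilin_map smH smA (*) (\<lambda>h a. pr (SH h) a)" "bilin_map smH smA (*) pr"
      "bilin_map smH smA (*) (\<lambda>h a. pr h (SA a))"
    by (simp_all add: bilin_map_pr bilin_map_def lin_map_def)
  have "(\<lambda>h a. pr (SH h) a) = (\<lambda>h a. pr h (SA a))"
  proof (rule conv_inverse_unique[OF bilin])
    show "conv copH copA (\<lambda>h a. pr (SH h) a) pr = (\<lambda>h a. epsH h * epsA a * 1)"
    proof (intro ext)
      fix h a
      have "conv copH copA (\<lambda>h a. pr (SH h) a) pr h a = tsum2 (\<lambda>h1 h2. pr (SH h1 * h2) a) (copH h)"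
        by (simp add: conv_def pr_mult_left)
      also have "\<dots> = pr (tsum2 (\<lambda>h1 h2. SH h1 * h2) (copH h)) a"
        by simp
      finally show "conv copH copA (\<lambda>h a. pr (SH h) a) pr h a = epsH h * epsA a * 1"
        by (simp add: H.antipode_left)
    qed
    show "conv copH copA pr (\<lambda>h a. pr h (SA a)) = (\<lambda>h a. epsH h * epsA a * 1)"
    proof (intro ext)
      fix h a
      have "conv copH copA pr (\<lambda>h a. pr h (SA a)) h a = tsum2 (\<lambda>a1 a2. pr h (a1 * SA a2)) (copA a)"
        by (simp add: conv_def pr_mult_right tsum2_commute[where l = "copH h"])
      also have "\<dots> = pr h (tsum2 (\<lambda>a1 a2. a1 * SA a2) (copA a))"
        by simp
      finally show "conv copH copA pr (\<lambda>h a. pr h (SA a)) h a = epsH h * epsA a * 1"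
        by (simp add: A.antipode_right)
    qed
  qed
  then show ?thesis
    by metis
qed

lemma pr_actH: "pr (actH copH SH h x) m = tsum2 (\<lambda>u v. pr h u * pr x v) (adcoact copA SA m)"
proof -
  have "pr (actH copH SH h x) m = tsum2 (\<lambda>h1 h2. tsum2 (\<lambda>m1 m2. tsum2 (\<lambda>m11 m12.
      pr h1 m11 * pr x m12 * pr h2 (SA m2)) (copA m1)) (copA m)) (copH h)"
    unfolding actH_def by (simp only: pr_tsum2_left pr_mult_left pr_antipode tsum2_mult_right[symmetric])
  also have "\<dots> = tsum2 (\<lambda>m1 m2. tsum2 (\<lambda>m11 m12. tsum2 (\<lambda>h1 h2.
      pr h1 m11 * pr x m12 * pr h2 (SA m2)) (copH h)) (copA m1)) (copA m)"
    by (simp only: tsum2_commute[where l = "copH h"])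
  also have "\<dots> = tsum2 (\<lambda>u v. pr h u * pr x v) (adcoact copA SA m)"
    by (simp only: tsum2_adcoact pr_mult_right tsum2_mult_left[symmetric] ac_simps)
  finally show ?thesis .
qed

lemma pr_actA: "pr (actA smH copH pr a x) m = pr x (a * m) - pr x a * epsA m"
  unfolding actA_def by (simp add: pr_mult_right)

lemma eps_actH: "epsH x = 0 \<Longrightarrow> epsH (actH copH SH h x) = 0"
  unfolding actH_def by (simp add: additive_tsum2[OF H.eps.additive_axioms])

lemma eps_actA: "epsH (actA smH copH pr a x) = 0"
proof -
  have "lin_map smH (*) (\<lambda>z. pr z a)"
    by (simp add: lin_map_def)
  from H.counit_right[OF this] show ?thesis
    unfolding actA_def by (simp add: additive_tsum2[OF H.eps.additive_axioms] mult.commute)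
qed

lemma qtangent_double_stable:
  assumes "bicov_quot smA copA epsA SA M"
  shows "double_stable smH copH SH pr (qtangent epsH pr M)"
proof -
  have M: "left_ideal smA M" "M \<subseteq> {a. epsA a = 0}" "\<And>m. m \<in> M \<Longrightarrow> in_tensor_right smA smA M (adcoact copA SA m)"
    using assms by (auto simp: bicov_quot_iff)
  have "actH copH SH h x \<in> qtangent epsH pr M" if x: "x \<in> qtangent epsH pr M" for h x
  proof -
    have "bilin smA smA (\<lambda>u v. pr h u * pr x v)"
      by (simp add: bilin_def lin_fun_def algebra_simps)
    moreover have "\<forall>u. \<forall>m\<in>M. pr h u * pr x m = 0"
      using x by (simp add: qtangent_def)
    ultimately have "pr (actH copH SH h x) m = 0" if "m \<in> M" for m
      using M(3)[OF that] by (simp add: pr_actH in_tensor_right_def)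
    then show ?thesis
      using x eps_actH by (simp add: qtangent_def)
  qed
  moreover have "actA smH copH pr a x \<in> qtangent epsH pr M" if x: "x \<in> qtangent epsH pr M" for a x
    using x M(1,2) eps_actA by (auto simp: qtangent_def pr_actA left_ideal_def)
  ultimately show ?thesis
    by (simp add: double_stable_def)
qed

lemma L_alpha_eq_qtangent:
  "L_alpha smH copH epsH epsA pr \<alpha> = qtangent epsH pr {a * (\<alpha> - smA (epsA \<alpha>) 1) | a. True}"
proof -
  have pr_L: "pr (tsum2 (\<lambda>x1 x2. smH (pr x2 \<alpha>) x1) (copH x)) a = pr x (a * \<alpha>)" for x a
    by (simp add: pr_mult_right mult.commute)
  have "tsum2 (\<lambda>x1 x2. smH (pr x2 \<alpha>) x1) (copH x) = smH (epsA \<alpha>) x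
      \<longleftrightarrow> (\<forall>a. pr x (a * \<alpha>) = epsA \<alpha> * pr x a)" for x
  proof
    assume L: "tsum2 (\<lambda>x1 x2. smH (pr x2 \<alpha>) x1) (copH x) = smH (epsA \<alpha>) x"
    show "\<forall>a. pr x (a * \<alpha>) = epsA \<alpha> * pr x a"
      using pr_L[of x] unfolding L by simp
  next
    assume "\<forall>a. pr x (a * \<alpha>) = epsA \<alpha> * pr x a"
    then show "tsum2 (\<lambda>x1 x2. smH (pr x2 \<alpha>) x1) (copH x) = smH (epsA \<alpha>) x"
      by (intro pr_eqI_left) (simp only: pr_L, simp)
  qed
  then show ?thesis
    by (auto simp: L_alpha_def qtangent_def right_diff_distrib)
qed

lemma L_alpha_tilde_eq_qtangent:
  "L_alpha_tilde epsH epsA pr \<alpha> = qtangent epsH pr {a * (\<alpha> - smA (epsA \<alpha>) 1) | a. epsA a = 0}"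
  by (auto simp: L_alpha_tilde_def qtangent_def right_diff_distrib mult.commute)

lemma L_alpha_1_eq_qtangent:
  "L_alpha_1 epsH epsA pr \<alpha> = qtangent epsH pr {a * (\<alpha> - smA (epsA \<alpha> + 1) 1) | a. epsA a = 0}"
  by (auto simp: L_alpha_1_def qtangent_def right_diff_distrib mult.commute)

end

theorem proposition2p5:
  fixes smH :: "complex \<Rightarrow> 'h::ring_1 \<Rightarrow> 'h" and copH :: "'h \<Rightarrow> ('h \<times> 'h) list"
    and epsH :: "'h \<Rightarrow> complex" and SH :: "'h \<Rightarrow> 'h"
    and smA :: "complex \<Rightarrow> 'a::ring_1 \<Rightarrow> 'a" and copA :: "'a \<Rightarrow> ('a \<times> 'a) list"
    and epsA :: "'a \<Rightarrow> complex" and SA :: "'a \<Rightarrow> 'a"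
    and pr :: "'h \<Rightarrow> 'a \<Rightarrow> complex" and \<alpha> :: 'a
  assumes "hopf_alg smH copH epsH SH"
    and "hopf_alg smA copA epsA SA"
    and "hopf_pairing smH copH epsH smA copA epsA pr"
    and "\<forall>c. \<alpha> \<noteq> smA c 1"
    and "teq2 smA smA (adcoact copA SA \<alpha>) [(1, \<alpha>)]"
  shows "double_stable smH copH SH pr (L_alpha smH copH epsH epsA pr \<alpha>)
       \<and> double_stable smH copH SH pr (L_alpha_tilde epsH epsA pr \<alpha>)
       \<and> double_stable smH copH SH pr (L_alpha_1 epsH epsA pr \<alpha>)
       \<and> bicov_quot smA copA epsA SA {a * \<alpha> - smA (epsA \<alpha>) a | a. True}
       \<and> L_alpha smH copH epsH epsA pr \<alpha>
           = qtangent epsH pr {a * \<alpha> - smA (epsA \<alpha>) a | a. True}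
       \<and> bicov_quot smA copA epsA SA {a * (\<alpha> - smA (epsA \<alpha> + 1) 1) | a. epsA a = 0}
       \<and> L_alpha_1 epsH epsA pr \<alpha>
           = qtangent epsH pr {a * (\<alpha> - smA (epsA \<alpha> + 1) 1) | a. epsA a = 0}"
proof -
  interpret hopf_pair smH copH epsH SH smA copA epsA SA pr
    by (intro hopf_pair.intro hopf.intro hopf_pair_axioms.intro assms(1-3))
  have inv: "ad_invariant smA copA SA \<alpha>"
    using assms(5) by (simp add: ad_invariant_def)
  have inv0: "ad_invariant smA copA SA (\<alpha> - smA (epsA \<alpha>) 1)"
    and inv1: "ad_invariant smA copA SA (\<alpha> - smA (epsA \<alpha> + 1) 1)"
    by (rule A.ad_invariant_diff_scale_one[OF inv])+
  have bicov: "bicov_quot smA copA epsA SA {a * (\<alpha> - smA (epsA \<alpha>) 1) | a. True}"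
      "bicov_quot smA copA epsA SA {a * (\<alpha> - smA (epsA \<alpha>) 1) | a. epsA a = 0}"
      "bicov_quot smA copA epsA SA {a * (\<alpha> - smA (epsA \<alpha> + 1) 1) | a. epsA a = 0}"
    using A.bicov_quot_right_multiples[OF inv0] A.bicov_quot_kernel_right_multiples[OF inv0]
      A.bicov_quot_kernel_right_multiples[OF inv1]
    by simp_all
  have type_I: "{a * \<alpha> - smA (epsA \<alpha>) a | a. True} = {a * (\<alpha> - smA (epsA \<alpha>) 1) | a. True}"
    by (rule A.right_multiples_diff_scale_one[symmetric])
  show ?thesis
    unfolding type_I L_alpha_eq_qtangent L_alpha_tilde_eq_qtangent L_alpha_1_eq_qtangent
    using bicov qtangent_double_stable[OF bicov(1)] qtangent_double_stable[OF bicov(2)]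
      qtangent_double_stable[OF bicov(3)]
    by blast
qed

end
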